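(* Let $X$ be a Banach space and $Y$ a closed subspace of $X$ satisfying the $(\ast)$-condition, witnessed by a projection $P$ on $X^\ast$, and let $\delta_{\{Y\}}(\varepsilon)=\inf\{\|\varphi\|-\|P\varphi\|:\varphi\in B_{X^\ast},\ \|\varphi-P\varphi\|\ge\varepsilon\}$ (with $\inf\emptyset=\infty$). Let $\alpha$ be an ordinal and $\varepsilon>0$. If $\varphi\in s^\alpha_{3\varepsilon}(B_{X^\ast})$ and $\|\varphi|_Y\|>1-\delta_{\{Y\}}(\varepsilon)$, then $\varphi|_Y\in s^\alpha_\varepsilon(B_{Y^\ast})$.
   Context: $Y$ satisfies the $(\ast)$-condition, witnessed by $P$, if $P$ is a linear projection on $X^\ast$ with $\ker P=Y^\perp$, $\|P\|\le1$, and for every $\varepsilon>0$ there is $\delta(\varepsilon)>0$ with $\|\varphi-P\varphi\|<\varepsilon$ whenever $\|\varphi\|=1$ and $\|\varphi+P\varphi\|>2-\delta(\varepsilon)$. Szlenk derivations: for weak*-compact $K$ in a dual space, $s_\varepsilon(K)=\{x^\ast\in K:\ \text{every weak*-neighborhood } V \text{ of } x^\ast \text{ has } \mathrm{diam}(V\cap K)>\varepsilon\}$, $s^0_\varepsilon(K)=K$, $s^{\beta+1}_\varepsilon(K)=s_\varepsilon(s^\beta_\varepsilon(K))$, $s^\alpha_\varepsilon(K)=\bigcap_{\beta<\alpha}s^\beta_\varepsilon(K)$ for limit $\alpha$. *)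

theory Defs
  imports "HOL-Analysis.Analysis" "HOL-Library.Extended_Real"
begin

text \<open>Its weak*-topology is the topology of pointwise convergence on X,
  i.e. the pullback of the product topology on \<open>'a \<Rightarrow> real\<close> under evaluation.\<close>

definition weak_star :: "('a::real_normed_vector \<Rightarrow>\<^sub>L real) topology" where
  "weak_star = pullback_topology UNIV blinfun_apply euclidean"

definition dual_ball :: "('a::real_normed_vector \<Rightarrow>\<^sub>L real) set" where
  "dual_ball = {\<phi>. norm \<phi> \<le> 1}"

text \<open>The dual Y* of a (closed) subspace Y of X: bounded linear functionals on Y,
  represented canonically by functions on X vanishing outside Y.\<close>

definition sub_dual :: "'a::real_normed_vector set \<Rightarrow> ('a \<Rightarrow> real) set" where
  "sub_dual Y = {f. (\<forall>x\<in>Y. \<forall>y\<in>Y. f (x + y) = f x + f y)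
                  \<and> (\<forall>c. \<forall>x\<in>Y. f (c *\<^sub>R x) = c * f x)
                  \<and> (\<exists>C. \<forall>x\<in>Y. \<bar>f x\<bar> \<le> C * norm x)
                  \<and> (\<forall>x. x \<notin> Y \<longrightarrow> f x = 0)}"

definition sub_dual_norm :: "'a::real_normed_vector set \<Rightarrow> ('a \<Rightarrow> real) \<Rightarrow> real" where
  "sub_dual_norm Y f = (SUP x\<in>{x\<in>Y. norm x \<le> 1}. \<bar>f x\<bar>)"

definition sub_dual_ball :: "'a::real_normed_vector set \<Rightarrow> ('a \<Rightarrow> real) set" where
  "sub_dual_ball Y = {f\<in>sub_dual Y. sub_dual_norm Y f \<le> 1}"

text \<open>Weak*-topology on Y*: pointwise convergence on Y (functionals vanish off Y).\<close>
definition sub_weak_star :: "'a::real_normed_vector set \<Rightarrow> ('a \<Rightarrow> real) topology" where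
  "sub_weak_star Y = subtopology euclidean (sub_dual Y)"

definition restr :: "'a set \<Rightarrow> ('a::real_normed_vector \<Rightarrow>\<^sub>L real) \<Rightarrow> ('a \<Rightarrow> real)" where
  "restr Y \<phi> = (\<lambda>x. if x \<in> Y then blinfun_apply \<phi> x else 0)"

definition diam_n :: "('b::minus \<Rightarrow> real) \<Rightarrow> 'b set \<Rightarrow> ereal" where
  "diam_n nm S = (SUP p\<in>S \<times> S. ereal (nm (fst p - snd p)))"

definition szlenk_deriv :: "'b topology \<Rightarrow> ('b::minus \<Rightarrow> real) \<Rightarrow> real \<Rightarrow> 'b set \<Rightarrow> 'b set" where
  "szlenk_deriv T nm \<epsilon> K =
     {x\<in>K. \<forall>V. (\<exists>U. openin T U \<and> x \<in> U \<and> U \<subseteq> V) \<longrightarrow> diam_n nm (V \<inter> K) > ereal \<epsilon>}"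

text \<open>Transfinite iteration, indexed by the elements of the field of a well-order r
  (every ordinal is the order type of such an initial segment).
  Minimal element: K; successor of b: derivation of the b-th set; limit: intersection.\<close>

definition preds :: "'o rel \<Rightarrow> 'o \<Rightarrow> 'o set" where
  "preds r a = {b. (b, a) \<in> r \<and> b \<noteq> a}"

definition szlenk_iter ::
  "'b topology \<Rightarrow> ('b::minus \<Rightarrow> real) \<Rightarrow> real \<Rightarrow> 'b set \<Rightarrow> 'o rel \<Rightarrow> 'o \<Rightarrow> 'b set" where
  "szlenk_iter T nm \<epsilon> K r = wfrec (r - Id) (\<lambda>S a.
      if preds r a = {} then K
      else if (\<exists>b\<in>preds r a. \<forall>c\<in>preds r a. (c, b) \<in> r)
        then szlenk_deriv T nm \<epsilon> (S (THE b. b \<in> preds r a \<and> (\<forall>c\<in>preds r a. (c, b) \<in> r)))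
      else (\<Inter>b\<in>preds r a. S b))"

definition star_condition ::
  "'a::banach set \<Rightarrow> (('a \<Rightarrow>\<^sub>L real) \<Rightarrow> ('a \<Rightarrow>\<^sub>L real)) \<Rightarrow> bool" where
  "star_condition Y P \<longleftrightarrow>
     linear P \<and> (\<forall>\<phi>. P (P \<phi>) = P \<phi>)
     \<and> {\<phi>. P \<phi> = 0} = {\<phi>. \<forall>y\<in>Y. blinfun_apply \<phi> y = 0}
     \<and> (\<forall>\<phi>. norm (P \<phi>) \<le> norm \<phi>)
     \<and> (\<forall>\<epsilon>>0. \<exists>\<delta>>0. \<forall>\<phi>. norm \<phi> = 1 \<and> norm (\<phi> + P \<phi>) > 2 - \<delta>
                          \<longrightarrow> norm (\<phi> - P \<phi>) < \<epsilon>)"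

definition delta_Y :: "(('a::banach \<Rightarrow>\<^sub>L real) \<Rightarrow> ('a \<Rightarrow>\<^sub>L real)) \<Rightarrow> real \<Rightarrow> ereal" where
  "delta_Y P \<epsilon> = (INF \<phi>\<in>{\<phi>\<in>dual_ball. norm (\<phi> - P \<phi>) \<ge> \<epsilon>}. ereal (norm \<phi> - norm (P \<phi>)))"

end

theory Submission
  imports Defs
begin

(*
  For a functional psi in the dual ball with norm (psi|Y) > 1 - delta(eps), the definition of
  delta gives norm (psi - P psi) < eps.  Since P kills exactly the annihilator of Y, P psi depends
  only on psi|Y, and a norm-preserving Hahn-Banach extension of psi|Y shows
  norm (P psi) <= norm (psi|Y).  Hence two such functionals whose restrictions are eps-close are
  3 eps-close.  Restriction is weak*-continuous and norm (psi|Y) is weak*-lower semicontinuous, so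
  every weak*-neighbourhood of phi|Y pulls back to a weak*-neighbourhood of phi inside the region
  norm (psi|Y) > 1 - delta(eps); a small set around phi|Y therefore pulls back to a small set
  around phi, and transfinite induction along the derivations yields the claim.
*)

section \<open>Hahn-Banach extension\<close>

text \<open>Partial extensions of \<open>f|Y\<close> bounded by \<open>N\<close> are encoded by their graphs, subspaces of
  \<open>'a \<times> real\<close>; the bound forces them to be graphs of functions.\<close>

definition bounded_graph_extensions ::
  "'a::real_normed_vector set \<Rightarrow> ('a \<Rightarrow> real) \<Rightarrow> real \<Rightarrow> ('a \<times> real) set set" where
  "bounded_graph_extensions Y f N =
     {G. subspace G \<and> (\<forall>y\<in>Y. (y, f y) \<in> G) \<and> (\<forall>(u, a)\<in>G. \<bar>a\<bar> \<le> N * norm u)}"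

lemma bounded_graph_extensions_chain_Union:
  assumes "C \<in> chains (bounded_graph_extensions Y f N)" and "C \<noteq> {}"
  shows "\<Union>C \<in> bounded_graph_extensions Y f N"
proof -
  have C: "\<And>G. G \<in> C \<Longrightarrow> G \<in> bounded_graph_extensions Y f N"
    and chain: "\<And>G H. G \<in> C \<Longrightarrow> H \<in> C \<Longrightarrow> G \<subseteq> H \<or> H \<subseteq> G"
    using assms(1) unfolding chains_def chain_subset_def by auto
  have "subspace (\<Union>C)"
    unfolding subspace_def
  proof (intro conjI ballI allI)
    show "0 \<in> \<Union>C"
      using assms(2) C subspace_0 unfolding bounded_graph_extensions_def by blast
  next
    fix p q assume "p \<in> \<Union>C" "q \<in> \<Union>C"
    then obtain G H where "G \<in> C" "H \<in> C" "p \<in> G" "q \<in> H" by blast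
    then show "p + q \<in> \<Union>C"
      using chain[of G H] C subspace_add unfolding bounded_graph_extensions_def by blast
  next
    fix k p assume "p \<in> \<Union>C"
    then show "k *\<^sub>R p \<in> \<Union>C"
      using C subspace_scale unfolding bounded_graph_extensions_def by blast
  qed
  then show ?thesis
    using assms(2) C unfolding bounded_graph_extensions_def by blast
qed

text \<open>The one-dimensional extension step: any \<open>c\<close> between these two bounds is an admissible
  value at \<open>x\<close>.\<close>

lemma bounded_graph_extension_gap:
  assumes "G \<in> bounded_graph_extensions Y f N" and "N \<ge> 0"
  obtains c where "\<And>v b. (v, b) \<in> G \<Longrightarrow> b - N * norm (v - x) \<le> c"
    and "\<And>u a. (u, a) \<in> G \<Longrightarrow> c \<le> N * norm (u + x) - a"
proof -
  have G: "subspace G" and bound: "\<And>u a. (u, a) \<in> G \<Longrightarrow> \<bar>a\<bar> \<le> N * norm u"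
    using assms(1) unfolding bounded_graph_extensions_def by auto
  have gap: "b - N * norm (v - x) \<le> N * norm (u + x) - a" if "(u, a) \<in> G" "(v, b) \<in> G" for u a v b
  proof -
    have "a + b \<le> N * norm (u + v)"
      using bound[of "u + v" "a + b"] subspace_add[OF G that] by simp
    also have "\<dots> \<le> N * (norm (u + x) + norm (v - x))"
      using norm_triangle_ineq[of "u + x" "v - x"] assms(2) by (intro mult_left_mono) simp_all
    finally show ?thesis by (simp add: algebra_simps)
  qed
  have "(0, 0) \<in> G"
    using subspace_0[OF G] by (simp add: zero_prod_def)
  define c where "c = (SUP (v, b)\<in>G. b - N * norm (v - x))"
  have "bdd_above ((\<lambda>(v, b). b - N * norm (v - x)) ` G)"
    using gap[OF \<open>(0, 0) \<in> G\<close>] by (intro bdd_aboveI2) auto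
  show ?thesis
  proof (rule that)
    show "b - N * norm (v - x) \<le> c" if "(v, b) \<in> G" for v b
      unfolding c_def using cSUP_upper[OF that \<open>bdd_above _\<close>] by simp
    show "c \<le> N * norm (u + x) - a" if "(u, a) \<in> G" for u a
      unfolding c_def using gap[OF that] \<open>(0, 0) \<in> G\<close> by (intro cSUP_least) auto
  qed
qed

lemma bounded_graph_extension_line_bound:
  assumes "G \<in> bounded_graph_extensions Y f N" and "(u, a) \<in> G"
    and lower: "\<And>v b. (v, b) \<in> G \<Longrightarrow> b - N * norm (v - x) \<le> c"
    and upper: "\<And>u a. (u, a) \<in> G \<Longrightarrow> c \<le> N * norm (u + x) - a"
  shows "a + t * c \<le> N * norm (u + t *\<^sub>R x)"
proof -
  have G: "subspace G"
    using assms(1) unfolding bounded_graph_extensions_def by auto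
  have scaled: "(s *\<^sub>R u, s * a) \<in> G" for s
    using subspace_scale[OF G assms(2), of s] by simp
  consider "t = 0" | "t > 0" | "t < 0" by linarith
  then show ?thesis
  proof cases
    case 1
    then show ?thesis
      using assms(1,2) unfolding bounded_graph_extensions_def by auto
  next
    case 2
    have "t * c \<le> t * (N * norm (inverse t *\<^sub>R u + x) - inverse t * a)"
      using upper[OF scaled] 2 by (intro mult_left_mono) auto
    also have "\<dots> = N * (t * norm (inverse t *\<^sub>R u + x)) - a"
      using 2 by (simp add: algebra_simps)
    also have "t * norm (inverse t *\<^sub>R u + x) = norm (t *\<^sub>R (inverse t *\<^sub>R u + x))"
      using 2 by simp
    also have "t *\<^sub>R (inverse t *\<^sub>R u + x) = u + t *\<^sub>R x"
      using 2 by (simp add: scaleR_add_right)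
    finally show ?thesis
      by simp
  next
    case 3
    have "- t * (- inverse t * a - N * norm (- inverse t *\<^sub>R u - x)) \<le> - t * c"
      using lower[OF scaled[of "- inverse t"]] 3 by (intro mult_left_mono) auto
    then have "a + t * c \<le> N * (- t * norm (- inverse t *\<^sub>R u - x))"
      using 3 by (simp add: algebra_simps)
    also have "- t * norm (- inverse t *\<^sub>R u - x) = norm (- t *\<^sub>R (- inverse t *\<^sub>R u - x))"
      using 3 by simp
    also have "- t *\<^sub>R (- inverse t *\<^sub>R u - x) = u + t *\<^sub>R x"
      using 3 by (simp add: scaleR_diff_right)
    finally show ?thesis .
  qed
qed

lemma bounded_graph_extensions_extend:
  assumes "G \<in> bounded_graph_extensions Y f N" and "N \<ge> 0"
  shows "\<exists>H\<in>bounded_graph_extensions Y f N. G \<subseteq> H \<and> (\<exists>a. (x, a) \<in> H)"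
proof -
  obtain c where lower: "\<And>v b. (v, b) \<in> G \<Longrightarrow> b - N * norm (v - x) \<le> c"
    and upper: "\<And>u a. (u, a) \<in> G \<Longrightarrow> c \<le> N * norm (u + x) - a"
    using bounded_graph_extension_gap[OF assms, where x = x] by blast
  have G: "subspace G" and graph: "\<forall>y\<in>Y. (y, f y) \<in> G"
    using assms(1) unfolding bounded_graph_extensions_def by auto
  define H where "H = {p + q | p q. p \<in> G \<and> q \<in> span {(x, c)}}"
  have H_iff: "z \<in> H \<longleftrightarrow> (\<exists>u a t. (u, a) \<in> G \<and> z = (u + t *\<^sub>R x, a + t * c))" for z
    unfolding H_def span_singleton by force
  have "subspace H"
    unfolding H_def using G subspace_span by (rule subspace_sums)
  moreover have "\<bar>snd z\<bar> \<le> N * norm (fst z)" if "z \<in> H" for z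
  proof -
    obtain u a t where ua: "(u, a) \<in> G" and z: "z = (u + t *\<^sub>R x, a + t * c)"
      using H_iff \<open>z \<in> H\<close> by blast
    have "(- u, - a) \<in> G"
      using subspace_neg[OF G ua] by simp
    from bounded_graph_extension_line_bound[OF assms(1) this lower upper, of "- t"]
    have "- (a + t * c) \<le> N * norm (u + t *\<^sub>R x)"
      by (metis minus_add_distrib mult_minus_left norm_minus_cancel scaleR_minus_left)
    with bounded_graph_extension_line_bound[OF assms(1) ua lower upper, of t] show ?thesis
      using z by simp
  qed
  moreover have "G \<subseteq> H"
  proof
    fix z assume "z \<in> G"
    then show "z \<in> H"
      using H_iff[of z] by (cases z) (metis add.right_neutral mult_zero_left scaleR_zero_left)
  qed
  moreover have "0 + (x, c) \<in> H"
    unfolding H_def using subspace_0[OF G] span_base[of "(x, c)" "{(x, c)}"] by blast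
  ultimately have "H \<in> bounded_graph_extensions Y f N" and "G \<subseteq> H" and "(x, c) \<in> H"
    using graph unfolding bounded_graph_extensions_def by auto
  then show ?thesis
    by blast
qed

lemma bounded_graph_extensions_has_maximal:
  assumes "subspace Y" and "linear f" and "\<And>y. y \<in> Y \<Longrightarrow> \<bar>f y\<bar> \<le> N * norm y"
  obtains M where "M \<in> bounded_graph_extensions Y f N"
    and "\<And>H. H \<in> bounded_graph_extensions Y f N \<Longrightarrow> M \<subseteq> H \<Longrightarrow> H = M"
proof -
  have "linear (\<lambda>y. (y, f y))"
    by (rule linearI) (simp_all add: linear_add[OF assms(2)] linear_scale[OF assms(2)])
  then have "subspace ((\<lambda>y. (y, f y)) ` Y)"
    using assms(1) by (rule linear_subspace_image)
  then have "(\<lambda>y. (y, f y)) ` Y \<in> bounded_graph_extensions Y f N"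
    using assms(3) unfolding bounded_graph_extensions_def by auto
  then have "\<exists>U\<in>bounded_graph_extensions Y f N. \<forall>G\<in>C. G \<subseteq> U"
    if "C \<in> chains (bounded_graph_extensions Y f N)" for C
    using bounded_graph_extensions_chain_Union[OF that] by (cases "C = {}") auto
  then have "\<exists>M\<in>bounded_graph_extensions Y f N.
      \<forall>H\<in>bounded_graph_extensions Y f N. M \<subseteq> H \<longrightarrow> H = M"
    by (intro Zorn_Lemma2) blast
  then show ?thesis
    using that by blast
qed

lemma hahn_banach_extension:
  fixes f :: "'a::real_normed_vector \<Rightarrow> real"
  assumes "subspace Y" and "linear f" and "N \<ge> 0" and "\<And>y. y \<in> Y \<Longrightarrow> \<bar>f y\<bar> \<le> N * norm y"
  obtains \<xi> :: "'a \<Rightarrow>\<^sub>L real" where "\<And>y. y \<in> Y \<Longrightarrow> \<xi> y = f y" and "norm \<xi> \<le> N"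
proof -
  obtain M where M: "M \<in> bounded_graph_extensions Y f N"
    and maximal: "\<And>H. H \<in> bounded_graph_extensions Y f N \<Longrightarrow> M \<subseteq> H \<Longrightarrow> H = M"
    using bounded_graph_extensions_has_maximal[OF assms(1,2,4)] by blast
  have sM: "subspace M" and graph: "\<And>y. y \<in> Y \<Longrightarrow> (y, f y) \<in> M"
    and bound: "\<And>u a. (u, a) \<in> M \<Longrightarrow> \<bar>a\<bar> \<le> N * norm u"
    using M unfolding bounded_graph_extensions_def by auto
  have total: "\<exists>a. (x, a) \<in> M" for x
    using bounded_graph_extensions_extend[OF M assms(3), of x] maximal by blast
  have unique: "a = b" if "(x, a) \<in> M" "(x, b) \<in> M" for x a b
    using bound[of 0 "a - b"] subspace_diff[OF sM that] by simp
  define g where "g x = (THE a. (x, a) \<in> M)" for x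
  have g: "(x, g x) \<in> M" for x
    unfolding g_def using total[of x] unique by (metis theI)
  have "bounded_linear g"
  proof (rule bounded_linear_intro)
    show "g (x + y) = g x + g y" for x y
      using unique[OF g] subspace_add[OF sM g[of x] g[of y]] by simp
    show "g (r *\<^sub>R x) = r *\<^sub>R g x" for r x
      using unique[OF g] subspace_scale[OF sM g[of x], of r] by simp
    show "norm (g x) \<le> norm x * N" for x
      using bound[OF g[of x]] by (simp add: mult.commute)
  qed
  show ?thesis
  proof (rule that)
    show "Blinfun g y = f y" if "y \<in> Y" for y
      using unique[OF g graph[OF that]] bounded_linear_Blinfun_apply[OF \<open>bounded_linear g\<close>] by simp
    show "norm (Blinfun g) \<le> N"
      using bound[OF g] assms(3)
      by (intro norm_blinfun_bound) (auto simp: bounded_linear_Blinfun_apply[OF \<open>bounded_linear g\<close>] mult.commute)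
  qed
qed

section \<open>Transfinite Szlenk iteration\<close>

lemma in_preds_imp_strict: "b \<in> preds r a \<Longrightarrow> (b, a) \<in> r - Id"
  unfolding preds_def by auto

lemma the_greatest_pred:
  assumes "Well_order r" and "b \<in> preds r a" and "\<forall>c\<in>preds r a. (c, b) \<in> r"
  shows "(THE b. b \<in> preds r a \<and> (\<forall>c\<in>preds r a. (c, b) \<in> r)) = b"
proof (rule the_equality)
  show "b' = b" if "b' \<in> preds r a \<and> (\<forall>c\<in>preds r a. (c, b') \<in> r)" for b'
    using that assms wo_rel.ANTISYM[unfolded wo_rel_def, OF assms(1)] by (auto dest: antisymD)
qed (use assms in blast)

lemma szlenk_iter_unfold:
  assumes "Well_order r"
  shows "szlenk_iter T nm e K r a =
    (if preds r a = {} then K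
     else if \<exists>b\<in>preds r a. \<forall>c\<in>preds r a. (c, b) \<in> r
       then szlenk_deriv T nm e (szlenk_iter T nm e K r (THE b. b \<in> preds r a \<and> (\<forall>c\<in>preds r a. (c, b) \<in> r)))
     else (\<Inter>b\<in>preds r a. szlenk_iter T nm e K r b))"
proof -
  let ?I = "szlenk_iter T nm e K r"
  let ?top = "\<exists>b\<in>preds r a. \<forall>c\<in>preds r a. (c, b) \<in> r"
  let ?b = "THE b. b \<in> preds r a \<and> (\<forall>c\<in>preds r a. (c, b) \<in> r)"
  have wf: "wf (r - Id)"
    using assms by (rule wo_rel.WF[unfolded wo_rel_def])
  have cut: "cut ?I (r - Id) a b = ?I b" if "b \<in> preds r a" for b
    using in_preds_imp_strict[OF that] by (rule cut_apply)
  have eq: "?I a = (if preds r a = {} then K else if ?top then szlenk_deriv T nm e (cut ?I (r - Id) a ?b)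
     else (\<Inter>b\<in>preds r a. cut ?I (r - Id) a b))"
    unfolding szlenk_iter_def by (subst wfrec[OF wf]) (rule refl)
  show ?thesis
  proof (cases ?top)
    case True
    then obtain b where b: "b \<in> preds r a" "\<forall>c\<in>preds r a. (c, b) \<in> r"
      by blast
    then have ne: "preds r a \<noteq> {}"
      by blast
    have "?b \<in> preds r a"
      using the_greatest_pred[OF assms b] b(1) by (rule ssubst)
    show ?thesis
      using eq unfolding if_not_P[OF ne] if_P[OF True] cut[OF \<open>?b \<in> preds r a\<close>] .
  next
    case False
    have "(\<Inter>b\<in>preds r a. cut ?I (r - Id) a b) = (\<Inter>b\<in>preds r a. ?I b)"
      by (rule INF_cong[OF refl cut])
    then show ?thesis
      using eq unfolding if_not_P[OF False] by argo
  qed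
qed

lemma szlenk_iter_bottom:
  assumes "Well_order r" and "preds r a = {}"
  shows "szlenk_iter T nm e K r a = K"
  using szlenk_iter_unfold[OF assms(1), of T nm e K a] unfolding if_P[OF assms(2)] .

lemma szlenk_iter_succ:
  assumes "Well_order r" and "b \<in> preds r a" and "\<forall>c\<in>preds r a. (c, b) \<in> r"
  shows "szlenk_iter T nm e K r a = szlenk_deriv T nm e (szlenk_iter T nm e K r b)"
proof -
  have ne: "preds r a \<noteq> {}" and top: "\<exists>b\<in>preds r a. \<forall>c\<in>preds r a. (c, b) \<in> r"
    using assms(2,3) by blast+
  show ?thesis
    using szlenk_iter_unfold[OF assms(1), of T nm e K a]
    unfolding if_not_P[OF ne] if_P[OF top] the_greatest_pred[OF assms] .
qed

lemma szlenk_iter_limit: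
  assumes "Well_order r" and "preds r a \<noteq> {}" and "\<not> (\<exists>b\<in>preds r a. \<forall>c\<in>preds r a. (c, b) \<in> r)"
  shows "szlenk_iter T nm e K r a = (\<Inter>b\<in>preds r a. szlenk_iter T nm e K r b)"
  using szlenk_iter_unfold[OF assms(1), of T nm e K a] unfolding if_not_P[OF assms(2)] if_not_P[OF assms(3)] .

lemma well_order_transfinite_induct [consumes 1, case_names bottom succ limit]:
  assumes "Well_order r"
    and bottom: "\<And>a. preds r a = {} \<Longrightarrow> Q a"
    and succ: "\<And>a b. b \<in> preds r a \<Longrightarrow> \<forall>c\<in>preds r a. (c, b) \<in> r \<Longrightarrow> Q b \<Longrightarrow> Q a"
    and limit: "\<And>a. preds r a \<noteq> {} \<Longrightarrow> \<not> (\<exists>b\<in>preds r a. \<forall>c\<in>preds r a. (c, b) \<in> r)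
                  \<Longrightarrow> (\<And>b. b \<in> preds r a \<Longrightarrow> Q b) \<Longrightarrow> Q a"
  shows "Q a"
  using wo_rel.WF[unfolded wo_rel_def, OF assms(1)]
proof (induction a rule: wf_induct_rule)
  case (less a)
  have IH: "\<And>b. b \<in> preds r a \<Longrightarrow> Q b"
    by (rule less[OF in_preds_imp_strict])
  show ?case
  proof (cases "preds r a = {}")
    case True
    then show ?thesis
      by (rule bottom)
  next
    case nonempty: False
    show ?thesis
    proof (cases "\<exists>b\<in>preds r a. \<forall>c\<in>preds r a. (c, b) \<in> r")
      case True
      then obtain b where b: "b \<in> preds r a" "\<forall>c\<in>preds r a. (c, b) \<in> r"
        by blast
      show ?thesis
        by (rule succ[OF b IH[OF b(1)]])
    next
      case False
      show ?thesis
        by (rule limit[OF nonempty False IH])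
    qed
  qed
qed

lemma szlenk_deriv_subset: "szlenk_deriv T nm e K \<subseteq> K"
  unfolding szlenk_deriv_def by blast

lemma szlenk_iter_subset:
  assumes "Well_order r"
  shows "szlenk_iter T nm e K r a \<subseteq> K"
  using assms
proof (induction a rule: well_order_transfinite_induct)
  case (bottom a)
  then show ?case
    by (simp add: szlenk_iter_bottom[OF assms])
next
  case (succ a b)
  then show ?case
    unfolding szlenk_iter_succ[OF assms succ(1,2)] using szlenk_deriv_subset by blast
next
  case (limit a)
  then show ?case
    unfolding szlenk_iter_limit[OF assms limit(1,2)] by blast
qed

lemma diam_n_le_iff: "diam_n nm S \<le> ereal e \<longleftrightarrow> (\<forall>x\<in>S. \<forall>y\<in>S. nm (x - y) \<le> e)"
  unfolding diam_n_def by (auto simp: SUP_le_iff)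

lemma szlenk_deriv_image_subset:
  assumes open_vimage: "\<And>U. openin T' U \<Longrightarrow> openin T {x\<in>D. f x \<in> U}"
    and maps: "f ` (D \<inter> A) \<subseteq> A'"
    and expands: "\<And>x y. x \<in> D \<inter> A \<Longrightarrow> y \<in> D \<inter> A \<Longrightarrow> nm' (f x - f y) \<le> e'
                    \<Longrightarrow> nm (x - y) \<le> e"
  shows "f ` (D \<inter> szlenk_deriv T nm e A) \<subseteq> szlenk_deriv T' nm' e' A'"
proof (clarify)
  fix x assume x: "x \<in> D" "x \<in> szlenk_deriv T nm e A"
  then have "x \<in> A"
    and big: "\<And>V. \<exists>U. openin T U \<and> x \<in> U \<and> U \<subseteq> V \<Longrightarrow> ereal e < diam_n nm (V \<inter> A)"
    unfolding szlenk_deriv_def by auto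
  have "ereal e' < diam_n nm' (V \<inter> A')" if "openin T' U" "f x \<in> U" "U \<subseteq> V" for U V
  proof (rule ccontr)
    assume "\<not> ereal e' < diam_n nm' (V \<inter> A')"
    then have small: "nm' (f y - f z) \<le> e'" if "f y \<in> V \<inter> A'" "f z \<in> V \<inter> A'" for y z
      using that by (auto simp: diam_n_le_iff not_less)
    let ?W = "{y\<in>D. f y \<in> U}"
    have "ereal e < diam_n nm (?W \<inter> A)"
      using big open_vimage[OF \<open>openin T' U\<close>] x(1) \<open>f x \<in> U\<close> by blast
    moreover have "diam_n nm (?W \<inter> A) \<le> ereal e"
      unfolding diam_n_le_iff using maps \<open>U \<subseteq> V\<close> by (blast intro: expands small)
    ultimately show False
      by simp
  qed
  then show "f x \<in> szlenk_deriv T' nm' e' A'"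
    using maps x(1) \<open>x \<in> A\<close> unfolding szlenk_deriv_def by blast
qed

lemma szlenk_iter_image_subset:
  assumes "Well_order r"
    and base: "f ` (D \<inter> K) \<subseteq> K'"
    and step: "\<And>A A'. A \<subseteq> K \<Longrightarrow> f ` (D \<inter> A) \<subseteq> A'
                 \<Longrightarrow> f ` (D \<inter> szlenk_deriv T nm e A) \<subseteq> szlenk_deriv T' nm' e' A'"
  shows "f ` (D \<inter> szlenk_iter T nm e K r a) \<subseteq> szlenk_iter T' nm' e' K' r a"
  using assms(1)
proof (induction a rule: well_order_transfinite_induct)
  case (bottom a)
  then show ?case
    using base by (simp add: szlenk_iter_bottom[OF assms(1)])
next
  case (succ a b)
  then show ?case
    unfolding szlenk_iter_succ[OF assms(1) succ(1,2)]
    by (intro step szlenk_iter_subset[OF assms(1)])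
next
  case (limit a)
  then show ?case
    unfolding szlenk_iter_limit[OF assms(1) limit(1,2)] by blast
qed

section \<open>Restriction of functionals to a subspace\<close>

lemma bdd_above_abs_apply_unit_ball:
  fixes \<psi> :: "'a::real_normed_vector \<Rightarrow>\<^sub>L real"
  shows "bdd_above ((\<lambda>x. \<bar>\<psi> x\<bar>) ` {x\<in>Y. norm x \<le> 1})"
proof (rule bdd_aboveI2)
  fix x assume "x \<in> {x\<in>Y. norm x \<le> 1}"
  then have "norm \<psi> * norm x \<le> norm \<psi>"
    by (simp add: mult_left_le)
  then show "\<bar>\<psi> x\<bar> \<le> norm \<psi>"
    using norm_blinfun[of \<psi> x] by simp
qed

lemma sub_dual_norm_restr:
  fixes \<psi> :: "'a::real_normed_vector \<Rightarrow>\<^sub>L real"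
  shows "sub_dual_norm Y (restr Y \<psi>) = (SUP x\<in>{x\<in>Y. norm x \<le> 1}. \<bar>\<psi> x\<bar>)"
  unfolding sub_dual_norm_def restr_def by (intro SUP_cong) auto

lemma abs_apply_le_sub_dual_norm_restr:
  fixes \<psi> :: "'a::real_normed_vector \<Rightarrow>\<^sub>L real"
  assumes "subspace Y" and "y \<in> Y"
  shows "\<bar>\<psi> y\<bar> \<le> sub_dual_norm Y (restr Y \<psi>) * norm y"
proof (cases "y = 0")
  case False
  have "inverse (norm y) *\<^sub>R y \<in> {x\<in>Y. norm x \<le> 1}"
    using assms False by (simp add: subspace_scale)
  then have "\<bar>\<psi> (inverse (norm y) *\<^sub>R y)\<bar> \<le> sub_dual_norm Y (restr Y \<psi>)"
    unfolding sub_dual_norm_restr by (rule cSUP_upper[OF _ bdd_above_abs_apply_unit_ball])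
  then show ?thesis
    using False by (simp add: blinfun.scaleR_right abs_mult field_simps)
qed simp

lemma sub_dual_norm_restr_nonneg:
  assumes "subspace Y"
  shows "0 \<le> sub_dual_norm Y (restr Y \<psi>)"
  using abs_apply_le_sub_dual_norm_restr[OF assms] subspace_scale[OF assms] subspace_0[OF assms]
  unfolding sub_dual_norm_restr
  by (intro order.trans[OF _ cSUP_upper[OF _ bdd_above_abs_apply_unit_ball, of 0]]) auto

lemma sub_dual_norm_restr_le_norm:
  fixes \<xi> \<psi> :: "'a::real_normed_vector \<Rightarrow>\<^sub>L real"
  assumes "subspace Y" and "\<And>y. y \<in> Y \<Longrightarrow> \<xi> y = \<psi> y"
  shows "sub_dual_norm Y (restr Y \<psi>) \<le> norm \<xi>"
  unfolding sub_dual_norm_restr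
proof (rule cSUP_least)
  show "{x\<in>Y. norm x \<le> 1} \<noteq> {}"
    using subspace_0[OF assms(1)] by force
  fix x assume x: "x \<in> {x\<in>Y. norm x \<le> 1}"
  then have "norm \<xi> * norm x \<le> norm \<xi>"
    by (simp add: mult_left_le)
  then show "\<bar>\<psi> x\<bar> \<le> norm \<xi>"
    using norm_blinfun[of \<xi> x] assms(2) x by simp
qed

lemma restr_in_sub_dual:
  assumes "subspace Y"
  shows "restr Y \<psi> \<in> sub_dual Y"
  unfolding sub_dual_def restr_def using assms
  by (auto simp: subspace_add subspace_scale blinfun.add_right blinfun.scaleR_right
      intro!: exI[of _ "norm \<psi>"] norm_blinfun[of \<psi>, simplified])

lemma restr_in_sub_dual_ball:
  assumes "subspace Y" and "\<psi> \<in> dual_ball"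
  shows "restr Y \<psi> \<in> sub_dual_ball Y"
  using restr_in_sub_dual[OF assms(1)] sub_dual_norm_restr_le_norm[OF assms(1), of \<psi> \<psi>] assms(2)
  unfolding sub_dual_ball_def dual_ball_def by auto

lemma restr_diff: "restr Y \<psi>1 - restr Y \<psi>2 = restr Y (\<psi>1 - \<psi>2)"
  by (rule ext) (simp add: restr_def blinfun.diff_left)

lemma openin_weak_star_vimage: "open V \<Longrightarrow> openin weak_star (blinfun_apply -` V)"
  unfolding weak_star_def openin_pullback_topology by auto

lemma openin_weak_star_restr_vimage:
  assumes "subspace Y" and "openin (sub_weak_star Y) U"
  shows "openin weak_star {\<psi>. restr Y \<psi> \<in> U}"
proof -
  obtain S where "open S" and U: "U = S \<inter> sub_dual Y"
    using assms(2) unfolding sub_weak_star_def openin_subtopology by auto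
  let ?R = "\<lambda>h::'a \<Rightarrow> real. \<lambda>x. if x \<in> Y then h x else 0"
  have "continuous_on UNIV (\<lambda>h::'a \<Rightarrow> real. if x \<in> Y then h x else 0)" for x
    by (cases "x \<in> Y") simp_all
  then have "continuous_on UNIV ?R"
    by (rule continuous_on_coordinatewise_then_product)
  then have "open (?R -` S)"
    using \<open>open S\<close> by (intro open_vimage)
  moreover have "{\<psi>. restr Y \<psi> \<in> U} = blinfun_apply -` (?R -` S)"
    unfolding U using restr_in_sub_dual[OF assms(1)] by (auto simp: restr_def)
  ultimately show ?thesis
    by (simp add: openin_weak_star_vimage)
qed

lemma openin_weak_star_sub_dual_norm_restr_gt:
  fixes Y :: "'a::real_normed_vector set"
  assumes "subspace Y"
  shows "openin weak_star {\<psi>. c < ereal (sub_dual_norm Y (restr Y \<psi>))}"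
proof -
  let ?B = "{x\<in>Y. norm x \<le> 1}"
  have ne: "?B \<noteq> {}"
    using subspace_0[OF assms] by force
  have open_gt: "open {t::real. c < ereal \<bar>t\<bar>}"
    by (cases c) (simp_all, intro open_Collect_less continuous_intros)
  have "open (\<Union>x\<in>?B. (\<lambda>h. h x) -` {t. c < ereal \<bar>t\<bar>})"
    by (intro open_UN ballI open_vimage[OF open_gt] continuous_on_product_coordinates)
  moreover have "c < ereal (sub_dual_norm Y (restr Y \<psi>)) \<longleftrightarrow> (\<exists>x\<in>?B. c < ereal \<bar>\<psi> x\<bar>)"
    for \<psi>
  proof (cases c)
    case (real t)
    then show ?thesis
      unfolding sub_dual_norm_restr using less_cSUP_iff[OF ne bdd_above_abs_apply_unit_ball] by simp
  qed (use ne in auto)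
  then have "{\<psi>. c < ereal (sub_dual_norm Y (restr Y \<psi>))}
      = blinfun_apply -` (\<Union>x\<in>?B. (\<lambda>h. h x) -` {t. c < ereal \<bar>t\<bar>})"
    by auto
  ultimately show ?thesis
    by (simp add: openin_weak_star_vimage)
qed

section \<open>The projection of the star-condition\<close>

lemma star_condition_eq_if_agree:
  fixes \<xi> \<zeta> :: "'a::banach \<Rightarrow>\<^sub>L real"
  assumes "star_condition Y P" and "\<And>y. y \<in> Y \<Longrightarrow> \<xi> y = \<zeta> y"
  shows "P \<xi> = P \<zeta>"
proof -
  have "\<xi> - \<zeta> \<in> {\<phi>. \<forall>y\<in>Y. blinfun_apply \<phi> y = 0}"
    using assms(2) by (simp add: blinfun.diff_left)
  then have "P (\<xi> - \<zeta>) = 0"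
    using assms(1) unfolding star_condition_def by blast
  then show ?thesis
    using assms(1) unfolding star_condition_def by (simp add: linear_diff)
qed

lemma star_condition_apply_eq:
  fixes \<psi> :: "'a::banach \<Rightarrow>\<^sub>L real"
  assumes "star_condition Y P" and "y \<in> Y"
  shows "P \<psi> y = \<psi> y"
proof -
  have "P (\<psi> - P \<psi>) = 0"
    using assms(1) unfolding star_condition_def by (simp add: linear_diff)
  then have "\<psi> - P \<psi> \<in> {\<phi>. \<forall>y\<in>Y. blinfun_apply \<phi> y = 0}"
    using assms(1) unfolding star_condition_def by blast
  then show ?thesis
    using assms(2) by (simp add: blinfun.diff_left)
qed

lemma star_condition_norm_le_sub_dual_norm:
  fixes \<zeta> :: "'a::banach \<Rightarrow>\<^sub>L real"
  assumes "star_condition Y P" and "subspace Y"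
  shows "norm (P \<zeta>) \<le> sub_dual_norm Y (restr Y \<zeta>)"
proof -
  obtain \<xi> :: "'a \<Rightarrow>\<^sub>L real" where agree: "\<And>y. y \<in> Y \<Longrightarrow> \<xi> y = \<zeta> y"
    and "norm \<xi> \<le> sub_dual_norm Y (restr Y \<zeta>)"
    using hahn_banach_extension[OF assms(2) bounded_linear.linear[OF blinfun.bounded_linear_right]
        sub_dual_norm_restr_nonneg[OF assms(2)] abs_apply_le_sub_dual_norm_restr[OF assms(2)]]
    by blast
  moreover have "norm (P \<xi>) \<le> norm \<xi>"
    using assms(1) unfolding star_condition_def by blast
  ultimately show ?thesis
    using star_condition_eq_if_agree[OF assms(1) agree] by simp
qed

lemma star_condition_norm_minus_projection_lt:
  assumes "star_condition Y P" and "subspace Y" and "\<psi> \<in> dual_ball"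
    and "1 - delta_Y P \<epsilon> < ereal (sub_dual_norm Y (restr Y \<psi>))"
  shows "norm (\<psi> - P \<psi>) < \<epsilon>"
proof (rule ccontr)
  assume "\<not> norm (\<psi> - P \<psi>) < \<epsilon>"
  then have "delta_Y P \<epsilon> \<le> ereal (norm \<psi> - norm (P \<psi>))"
    unfolding delta_Y_def using assms(3) by (intro INF_lower) auto
  then have "1 - ereal (norm \<psi> - norm (P \<psi>)) \<le> 1 - delta_Y P \<epsilon>"
    by (rule ereal_minus_mono[OF order.refl])
  moreover have "sub_dual_norm Y (restr Y \<psi>) \<le> norm (P \<psi>)"
    using sub_dual_norm_restr_le_norm[OF assms(2)] star_condition_apply_eq[OF assms(1)] by blast
  with assms(3) have "sub_dual_norm Y (restr Y \<psi>) \<le> 1 - (norm \<psi> - norm (P \<psi>))"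
    unfolding dual_ball_def by simp
  ultimately have "ereal (sub_dual_norm Y (restr Y \<psi>)) \<le> 1 - delta_Y P \<epsilon>"
    by (metis ereal_less_eq(3) ereal_minus(1) one_ereal_def order_trans)
  then show False
    using assms(4) by simp
qed

lemma star_condition_norm_diff_le_of_restr:
  assumes "star_condition Y P" and "subspace Y" and "\<psi>1 \<in> dual_ball" and "\<psi>2 \<in> dual_ball"
    and "1 - delta_Y P \<epsilon> < ereal (sub_dual_norm Y (restr Y \<psi>1))"
    and "1 - delta_Y P \<epsilon> < ereal (sub_dual_norm Y (restr Y \<psi>2))"
    and "sub_dual_norm Y (restr Y \<psi>1 - restr Y \<psi>2) \<le> \<epsilon>"
  shows "norm (\<psi>1 - \<psi>2) \<le> 3 * \<epsilon>"
proof -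
  have "norm (P \<psi>1 - P \<psi>2) \<le> \<epsilon>"
    using star_condition_norm_le_sub_dual_norm[OF assms(1,2), of "\<psi>1 - \<psi>2"] assms(1,7)
    unfolding restr_diff star_condition_def by (simp add: linear_diff)
  moreover have "norm (\<psi>1 - \<psi>2) \<le> norm ((\<psi>1 - P \<psi>1) + (P \<psi>1 - P \<psi>2)) + norm (\<psi>2 - P \<psi>2)"
    using norm_triangle_ineq4[of "(\<psi>1 - P \<psi>1) + (P \<psi>1 - P \<psi>2)" "\<psi>2 - P \<psi>2"] by simp
  moreover have "norm ((\<psi>1 - P \<psi>1) + (P \<psi>1 - P \<psi>2))
      \<le> norm (\<psi>1 - P \<psi>1) + norm (P \<psi>1 - P \<psi>2)"
    by (rule norm_triangle_ineq)
  ultimately show ?thesis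
    using star_condition_norm_minus_projection_lt[OF assms(1,2,3,5)] star_condition_norm_minus_projection_lt[OF assms(1,2,4,6)]
    by linarith
qed

lemma restr_image_szlenk_deriv_subset:
  fixes Y :: "'a::banach set" and P :: "('a \<Rightarrow>\<^sub>L real) \<Rightarrow> ('a \<Rightarrow>\<^sub>L real)" and \<epsilon> :: real
  defines "D \<equiv> {\<psi>. 1 - delta_Y P \<epsilon> < ereal (sub_dual_norm Y (restr Y \<psi>))}"
  assumes "star_condition Y P" and "subspace Y" and "A \<subseteq> dual_ball" and "restr Y ` (D \<inter> A) \<subseteq> A'"
  shows "restr Y ` (D \<inter> szlenk_deriv weak_star norm (3 * \<epsilon>) A)
    \<subseteq> szlenk_deriv (sub_weak_star Y) (sub_dual_norm Y) \<epsilon> A'"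
proof (rule szlenk_deriv_image_subset)
  fix U assume "openin (sub_weak_star Y) U"
  then have "openin weak_star ({\<psi>. restr Y \<psi> \<in> U} \<inter> D)"
    unfolding D_def using assms(3)
    by (intro openin_Int openin_weak_star_restr_vimage openin_weak_star_sub_dual_norm_restr_gt)
  then show "openin weak_star {\<psi>\<in>D. restr Y \<psi> \<in> U}"
    by (simp add: Collect_conj_eq Int_commute)
next
  fix \<psi>1 \<psi>2 assume "\<psi>1 \<in> D \<inter> A" "\<psi>2 \<in> D \<inter> A"
    and "sub_dual_norm Y (restr Y \<psi>1 - restr Y \<psi>2) \<le> \<epsilon>"
  then show "norm (\<psi>1 - \<psi>2) \<le> 3 * \<epsilon>"
    using assms(4) unfolding D_def
    by (intro star_condition_norm_diff_le_of_restr[OF assms(2,3)]) auto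
qed (rule assms(5))

theorem lemma3p8:
  fixes Y :: "'a::banach set"
    and P :: "('a \<Rightarrow>\<^sub>L real) \<Rightarrow> ('a \<Rightarrow>\<^sub>L real)"
    and r :: "'o rel" and \<alpha> :: 'o
    and \<epsilon> :: real and \<phi> :: "'a \<Rightarrow>\<^sub>L real"
  assumes "subspace Y" and "closed Y"
    and "star_condition Y P"
    and "Well_order r" and "\<alpha> \<in> Field r"
    and "\<epsilon> > 0"
    and "\<phi> \<in> szlenk_iter weak_star norm (3 * \<epsilon>) dual_ball r \<alpha>"
    and "ereal (sub_dual_norm Y (restr Y \<phi>)) > 1 - delta_Y P \<epsilon>"
  shows "restr Y \<phi> \<in> szlenk_iter (sub_weak_star Y) (sub_dual_norm Y) \<epsilon> (sub_dual_ball Y) r \<alpha>"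
proof -
  let ?D = "{\<psi>. 1 - delta_Y P \<epsilon> < ereal (sub_dual_norm Y (restr Y \<psi>))}"
  have "restr Y ` (?D \<inter> szlenk_iter weak_star norm (3 * \<epsilon>) dual_ball r \<alpha>)
      \<subseteq> szlenk_iter (sub_weak_star Y) (sub_dual_norm Y) \<epsilon> (sub_dual_ball Y) r \<alpha>"
  proof (rule szlenk_iter_image_subset[OF assms(4)])
    show "restr Y ` (?D \<inter> dual_ball) \<subseteq> sub_dual_ball Y"
      using restr_in_sub_dual_ball[OF assms(1)] by blast
  qed (rule restr_image_szlenk_deriv_subset[OF assms(3,1)])
  then show ?thesis
    using assms(7,8) by blast
qed

end
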